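(* Assume the index vectors $\mathbf v_1,\dots,\mathbf v_k\in\mathbb R^d$ are orthonormal and that $\sigma^*$ has information exponent $p^*\ge2$. Let $\mathbf w(t)$ solve $\frac{d}{dt}\mathbf w=-(I_d-\mathbf w\mathbf w^T)\nabla L(\mathbf w)$ from a unit vector $\mathbf w(0)$, let $\mathbf u_j(t)=\mathbf v_j^T\mathbf w(t)$, and suppose $|\mathbf u_1(0)|=\max_{j\in[k]}|\mathbf u_j(0)|$. Then: (i) if $\mathbf u_j(0)>0$ for all $j\in[k]$, then $\mathbf u_1(t)=\max_{j\in[k]}\mathbf u_j(t)$ for all $t\ge0$; (ii) if $\sigma^*$ is even, then for any initialization $|\mathbf u_1(t)|=\max_{j\in[k]}|\mathbf u_j(t)|$ for all $t\ge0$.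
   Context: Let $h_p$ be the probabilist's Hermite polynomials normalized to be orthonormal in $L^2$ of the standard Gaussian measure. Let $\sigma=\sum_{p\ge1}a_ph_p$, $\sigma^*=\sum_{p\ge1}b_ph_p$ be square integrable w.r.t. the standard Gaussian, $p^*=\min\{p:b_p\neq0\}$, $c_p=a_pb_p$. Standing assumptions: $c_{p^*}>0$, $c_p\ge0$ for all $p\ge p^*$, and $\sum_{p\ge p^*}c_p\,p<\infty$. The loss is $L(\mathbf w)=C-\mathbb E_{\mathbf x\sim\mathcal N(0,I_d)}\big[\sigma(\mathbf w^T\mathbf x)\sum_{j=1}^k\sigma^*(\mathbf v_j^T\mathbf x)\big]$, which for unit $\mathbf w$ equals $C-\sum_{p\ge p^*}c_p\sum_j(\mathbf v_j^T\mathbf w)^p$; this formula defines $L$ and its Euclidean gradient $\nabla L$ on $\mathbb R^d$. With orthonormal index vectors, the dot products evolve as $\frac{d}{dt}\mathbf u_j=\sum_{p\ge p^*}c_pp\big(\mathbf u_j^{p-1}-\mathbf u_j\sum_{j'}\mathbf u_{j'}^p\big)$. *)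

theory Defs
  imports "HOL-Probability.Probability"
begin

text \<open>Probabilist's Hermite polynomials He_p and their orthonormalisation
  h_p = He_p / sqrt(p!) in L^2 of the standard Gaussian measure.\<close>
fun He :: "nat \<Rightarrow> real \<Rightarrow> real" where
  "He 0 x = 1"
| "He (Suc 0) x = x"
| "He (Suc (Suc n)) x = x * He (Suc n) x - real (Suc n) * He n x"

definition hermite_h :: "nat \<Rightarrow> real \<Rightarrow> real" where
  "hermite_h p x = He p x / sqrt (fact p)"

definition gauss_L2 :: "(real \<Rightarrow> real) \<Rightarrow> bool" where
  "gauss_L2 f \<longleftrightarrow> f \<in> borel_measurable borel \<and>
     integrable lborel (\<lambda>x. std_normal_density x * (f x)\<^sup>2)"

definition hcoeff :: "(real \<Rightarrow> real) \<Rightarrow> nat \<Rightarrow> real" where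
  "hcoeff f p = (LINT x|lborel. std_normal_density x * f x * hermite_h p x)"

definition info_exp :: "(real \<Rightarrow> real) \<Rightarrow> nat" where
  "info_exp f = (LEAST p. hcoeff f p \<noteq> 0)"

text \<open>The loss L(w) = C - sum_p c_p sum_{j=1..k} (v_j . w)^p (with c_p = a_p b_p),
  and its Euclidean gradient, obtained by formal termwise differentiation of this formula.\<close>
definition lossL :: "real \<Rightarrow> (nat \<Rightarrow> real) \<Rightarrow> (nat \<Rightarrow> real^'d) \<Rightarrow> nat \<Rightarrow> real^'d \<Rightarrow> real" where
  "lossL C c v k w = C - (\<Sum>p. c p * (\<Sum>j\<in>{1..k}. (v j \<bullet> w) ^ p))"

definition gradL :: "(nat \<Rightarrow> real) \<Rightarrow> (nat \<Rightarrow> real^'d) \<Rightarrow> nat \<Rightarrow> real^'d \<Rightarrow> real^'d" where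
  "gradL c v k w = - (\<Sum>j\<in>{1..k}. (\<Sum>p. c p * real p * (v j \<bullet> w) ^ (p - 1)) *\<^sub>R v j)"

end

theory Submission
  imports Defs
begin

(* Write u_j = v_j . w and g(u) = sum_p c_p p u^(p-1). Orthonormality decouples the flow into
   u_j' = g(u_j) - S u_j with one common factor S = sum_i u_i g(u_i), and 1 - |w|^2 solves a
   linear equation, so w stays on the unit sphere. Two solutions of the scalar equation with
   u_i^2 + u_j^2 <= 1 can only meet inside (-1, 1), where g is Lipschitz, so by a Gronwall
   argument their difference never changes sign. If sigma* is even, g is odd, hence -u_j is a
   solution as well and the comparison extends to |u_j|. *)

lemma He_uminus: "He p (- x) = (-1) ^ p * He p x"
  by (induction p x rule: He.induct) (auto simp: algebra_simps)

lemma hcoeff_odd_eq_0: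
  assumes even_f: "\<And>x. f (- x) = f x" and "odd p"
  shows "hcoeff f p = 0"
proof -
  let ?F = "\<lambda>x. std_normal_density x * f x * hermite_h p x"
  have F_odd: "?F (- x) = - ?F x" for x
    using \<open>odd p\<close> by (simp add: hermite_h_def He_uminus even_f std_normal_density_def)
  have "(\<integral>x. ?F x \<partial>lborel) = \<bar>-1::real\<bar> *\<^sub>R (\<integral>x. ?F (0 + (-1) * x) \<partial>lborel)"
    by (rule lborel_integral_real_affine) simp
  also have "\<dots> = - (\<integral>x. ?F x \<partial>lborel)"
    using F_odd by simp
  finally show ?thesis
    unfolding hcoeff_def by simp
qed

lemma hcoeff_eq_0_below_info_exp: "p < info_exp f \<Longrightarrow> hcoeff f p = 0"
  unfolding info_exp_def using not_less_Least by blast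

lemma suminf_eq_suminf_Suc:
  fixes f :: "nat \<Rightarrow> 'a::real_normed_vector"
  assumes "f 0 = 0"
  shows "suminf f = (\<Sum>n. f (Suc n))"
  unfolding suminf_def sums_Suc_iff using assms by simp

definition link_deriv :: "(nat \<Rightarrow> real) \<Rightarrow> real \<Rightarrow> real" where
  "link_deriv c x = (\<Sum>p. c p * real p * x ^ (p - 1))"

lemma gradL_eq_link_deriv:
  "gradL c v k x = - (\<Sum>j\<in>{1..k}. link_deriv c (v j \<bullet> x) *\<^sub>R v j)"
  by (simp add: gradL_def link_deriv_def)

lemma link_deriv_eq_powser: "link_deriv c x = (\<Sum>n. diffs c n * x ^ n)"
  unfolding link_deriv_def diffs_def by (subst suminf_eq_suminf_Suc) (simp_all add: mult_ac)

lemma summable_diffs_iff: "summable (diffs c) \<longleftrightarrow> summable (\<lambda>p. c p * real p :: real)"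
  unfolding diffs_def using summable_Suc_iff[of "\<lambda>p. c p * real p"] by (simp add: mult_ac)

lemma powser_nonneg_coeffs_abs_le:
  fixes a :: "nat \<Rightarrow> real"
  assumes a_nonneg: "\<And>n. 0 \<le> a n" and summable_R: "summable (\<lambda>n. a n * R ^ n)" and "\<bar>x\<bar> \<le> R"
  shows "summable (\<lambda>n. a n * x ^ n)" and "\<bar>\<Sum>n. a n * x ^ n\<bar> \<le> (\<Sum>n. a n * R ^ n)"
proof -
  have term_le: "norm (a n * x ^ n) \<le> a n * R ^ n" for n
    using a_nonneg[of n] \<open>\<bar>x\<bar> \<le> R\<close> by (simp add: abs_mult power_abs mult_left_mono power_mono)
  show "summable (\<lambda>n. a n * x ^ n)"
    by (rule summable_comparison_test[OF _ summable_R]) (use term_le in blast)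
  show "\<bar>\<Sum>n. a n * x ^ n\<bar> \<le> (\<Sum>n. a n * R ^ n)"
    using norm_suminf_le[OF term_le summable_R] by simp
qed

lemma powser_nonneg_coeffs_bounded_near_unit_interval:
  fixes a :: "nat \<Rightarrow> real"
  assumes a_nonneg: "\<And>n. 0 \<le> a n" and "summable a"
  shows "\<exists>\<delta>>0. \<exists>M. \<forall>x. \<bar>x\<bar> \<le> 1 + \<delta> \<longrightarrow> \<bar>\<Sum>n. a n * x ^ n\<bar> \<le> M"
proof (cases "\<exists>R>1. summable (\<lambda>n. a n * R ^ n)")
  case True
  then obtain R where "R > 1" "summable (\<lambda>n. a n * R ^ n)"
    by blast
  then show ?thesis
    using powser_nonneg_coeffs_abs_le(2)[OF a_nonneg]
    by (intro exI[of _ "R - 1"] conjI exI[of _ "\<Sum>n. a n * R ^ n"]) auto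
next
  case False
  have summable_1: "summable (\<lambda>n. a n * 1 ^ n)"
    using \<open>summable a\<close> by simp
  \<comment> \<open>The series then diverges beyond 1, where its sum is the junk value \<open>THE s. False\<close>,
    the same for every \<open>x\<close>.\<close>
  have junk: "(\<Sum>n. a n * x ^ n) = (THE s. False)" if "\<bar>x\<bar> > 1" for x
  proof -
    have "\<not> summable (\<lambda>n. a n * x ^ n)"
    proof
      assume "summable (\<lambda>n. a n * x ^ n)"
      then have "summable (\<lambda>n. a n * ((1 + \<bar>x\<bar>) / 2) ^ n)"
        by (rule powser_inside) (use that in auto)
      moreover have "(1 + \<bar>x\<bar>) / 2 > 1"
        using that by simp
      ultimately show False
        using False by blast
    qed
    then have "(\<lambda>n. a n * x ^ n) sums s = False" for s
      unfolding summable_def by blast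
    then show ?thesis
      unfolding suminf_def by presburger
  qed
  have "\<bar>\<Sum>n. a n * x ^ n\<bar> \<le> max (\<Sum>n. a n) \<bar>THE s. False\<bar>" for x :: real
    using junk[of x] powser_nonneg_coeffs_abs_le(2)[OF a_nonneg summable_1, of x]
    by (cases "\<bar>x\<bar> > 1") auto
  then show ?thesis
    by (intro exI[of _ 1]) auto
qed

lemma powser_nonneg_coeffs_lipschitz:
  fixes a :: "nat \<Rightarrow> real"
  assumes a_nonneg: "\<And>n. 0 \<le> a n" and "summable a" and "0 \<le> \<rho>" "\<rho> < 1"
  shows "\<exists>L. L-lipschitz_on {-\<rho>..\<rho>} (\<lambda>x. \<Sum>n. a n * x ^ n)"
proof -
  have summable_1: "summable (\<lambda>n. a n * 1 ^ n)"
    using \<open>summable a\<close> by simp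
  have diffs_nonneg: "0 \<le> diffs a n" for n
    using a_nonneg by (simp add: diffs_def)
  have summable_diffs: "summable (\<lambda>n. diffs a n * \<rho> ^ n)"
    by (rule termdiff_converges[of _ 1]) (use \<open>\<rho> < 1\<close> \<open>0 \<le> \<rho>\<close> powser_inside[OF summable_1] in auto)
  define L where "L = (\<Sum>n. diffs a n * \<rho> ^ n)"
  have "L-lipschitz_on {-\<rho>..\<rho>} (\<lambda>x. \<Sum>n. a n * x ^ n)"
  proof (rule lipschitz_onI)
    fix x y assume "x \<in> {-\<rho>..\<rho>}" "y \<in> {-\<rho>..\<rho>}"
    have "norm ((\<Sum>n. a n * x ^ n) - (\<Sum>n. a n * y ^ n)) \<le> L * norm (x - y)"
    proof (rule field_differentiable_bound[OF convex_real_interval(5)])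
      fix z :: real assume z: "z \<in> {-\<rho>..\<rho>}"
      then show "((\<lambda>x. \<Sum>n. a n * x ^ n) has_field_derivative (\<Sum>n. diffs a n * z ^ n)) (at z within {-\<rho>..\<rho>})"
        using termdiffs_strong[OF summable_1, of z] \<open>\<rho> < 1\<close> by (auto intro: has_field_derivative_at_within)
      from z have "\<bar>z\<bar> \<le> \<rho>"
        by auto
      then show "norm (\<Sum>n. diffs a n * z ^ n) \<le> L"
        unfolding L_def using powser_nonneg_coeffs_abs_le(2)[OF diffs_nonneg summable_diffs] by simp
    qed fact+
    then show "dist (\<Sum>n. a n * x ^ n) (\<Sum>n. a n * y ^ n) \<le> L * dist x y"
      by (simp add: dist_norm)
  next
    show "0 \<le> L"
      unfolding L_def using summable_diffs diffs_nonneg \<open>0 \<le> \<rho>\<close> by (simp add: suminf_nonneg)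
  qed
  then show ?thesis ..
qed

lemma eq_0_if_deriv_abs_le_linear:
  fixes f f' :: "real \<Rightarrow> real"
  assumes "a \<le> b" and cont: "continuous_on {a..b} f"
    and deriv: "\<And>s. a < s \<Longrightarrow> s < b \<Longrightarrow> (f has_real_derivative f' s) (at s)"
    and bound: "\<And>s. a < s \<Longrightarrow> s < b \<Longrightarrow> \<bar>f' s\<bar> \<le> K * \<bar>f s\<bar>"
    and "f a = 0"
  shows "f b = 0"
proof -
  define h where "h s = (f s)\<^sup>2 * exp (- 2 * K * s)" for s
  have "h b \<le> h a"
  proof (rule DERIV_nonpos_imp_decreasing_open[OF \<open>a \<le> b\<close>])
    fix s assume s: "a < s" "s < b"
    have "f s * f' s \<le> \<bar>f s\<bar> * \<bar>f' s\<bar>"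
      by (metis abs_ge_self abs_mult)
    also have "\<dots> \<le> \<bar>f s\<bar> * (K * \<bar>f s\<bar>)"
      using bound[OF s] by (intro mult_left_mono) auto
    finally have "f s * f' s \<le> K * (f s)\<^sup>2"
      by (simp add: power2_eq_square algebra_simps)
    then have "2 * f s * f' s * exp (- 2 * K * s) - (f s)\<^sup>2 * (2 * K) * exp (- 2 * K * s) \<le> 0"
      by (simp add: algebra_simps mult_right_mono)
    moreover have "(h has_real_derivative
        2 * f s * f' s * exp (- 2 * K * s) - (f s)\<^sup>2 * (2 * K) * exp (- 2 * K * s)) (at s)"
      unfolding h_def by (rule derivative_eq_intros deriv[OF s] refl | simp)+
    ultimately show "\<exists>y. (h has_real_derivative y) (at s) \<and> y \<le> 0"
      by blast
  next
    show "continuous_on {a..b} h"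
      unfolding h_def by (intro continuous_intros cont)
  qed
  then show "f b = 0"
    using \<open>f a = 0\<close> by (simp add: h_def mult_le_0_iff)
qed

lemma last_zero_before_negative:
  fixes f :: "real \<Rightarrow> real"
  assumes cont: "continuous_on {0..t} f" and "0 \<le> t" "0 \<le> f 0" "f t < 0"
  obtains t0 where "0 \<le> t0" "t0 < t" "f t0 = 0" "\<And>s. t0 < s \<Longrightarrow> s \<le> t \<Longrightarrow> f s < 0"
proof -
  define A where "A = {s\<in>{0..t}. 0 \<le> f s}"
  define t0 where "t0 = Sup A"
  have "closed A"
  proof -
    have "closed ({0..t} \<inter> f -` {0..})"
      using cont by (intro continuous_closed_preimage) auto
    moreover have "A = {0..t} \<inter> f -` {0..}"
      by (auto simp: A_def)
    ultimately show ?thesis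
      by simp
  qed
  moreover have "0 \<in> A" and "bdd_above A"
    using \<open>0 \<le> t\<close> \<open>0 \<le> f 0\<close> by (auto simp: A_def bdd_above_def)
  ultimately have "t0 \<in> A"
    unfolding t0_def using closed_contains_Sup by blast
  then have t0: "0 \<le> t0" "t0 < t" "0 \<le> f t0"
    using \<open>f t < 0\<close> by (auto simp: A_def order.order_iff_strict)
  have negative_after: "f s < 0" if "t0 < s" "s \<le> t" for s
    using cSup_upper[OF _ \<open>bdd_above A\<close>, of s] that t0 by (force simp: A_def t0_def)
  obtain z where "t0 \<le> z" "z \<le> t" "f z = 0"
    using IVT2'[of f t 0 t0] \<open>f t < 0\<close> t0 continuous_on_subset[OF cont, of "{t0..t}"] by force
  with negative_after have "f t0 = 0"
    by (metis order.order_iff_strict order.strict_iff_not)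
  with t0 negative_after show ?thesis
    using that by blast
qed

lemma nonneg_preserved_if_deriv_locally_linear:
  fixes f f' :: "real \<Rightarrow> real"
  assumes deriv: "\<And>t. 0 \<le> t \<Longrightarrow> (f has_real_derivative f' t) (at t within {0..})"
    and "0 \<le> f 0"
    and local_bound: "\<And>t0. 0 \<le> t0 \<Longrightarrow> f t0 = 0 \<Longrightarrow> \<exists>K. \<forall>\<^sub>F t in at_right t0. \<bar>f' t\<bar> \<le> K * \<bar>f t\<bar>"
    and "0 \<le> t"
  shows "0 \<le> f t"
proof (rule ccontr)
  assume "\<not> 0 \<le> f t"
  have cont: "continuous_on {a..b} f" if "0 \<le> a" for a b
  proof -
    have "continuous (at s within {0..}) f" if "0 \<le> s" for s
      using deriv[OF that] DERIV_continuous by blast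
    then have "continuous (at s within {a..b}) f" if "s \<in> {a..b}" for s
      using that \<open>0 \<le> a\<close> by (meson atLeastAtMost_iff atLeast_iff continuous_within_subset order_trans subsetI)
    then show ?thesis
      by (simp add: continuous_on_eq_continuous_within)
  qed
  obtain t0 where t0: "0 \<le> t0" "t0 < t" "f t0 = 0" and negative_after: "\<And>s. t0 < s \<Longrightarrow> s \<le> t \<Longrightarrow> f s < 0"
    using last_zero_before_negative[OF cont[of 0 t]] \<open>0 \<le> t\<close> \<open>0 \<le> f 0\<close> \<open>\<not> 0 \<le> f t\<close> by auto
  then obtain K where "\<forall>\<^sub>F s in at_right t0. \<bar>f' s\<bar> \<le> K * \<bar>f s\<bar>"
    using local_bound by blast
  then obtain b where "t0 < b" and bound: "\<And>s. t0 < s \<Longrightarrow> s < b \<Longrightarrow> \<bar>f' s\<bar> \<le> K * \<bar>f s\<bar>"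
    unfolding eventually_at_right_field by blast
  define t2 where "t2 = min t ((t0 + b) / 2)"
  have t2: "t0 < t2" "t2 \<le> t" "t2 < b"
    using \<open>t0 < b\<close> t0 unfolding t2_def by (simp_all add: min_def)
  have "f t2 = 0"
  proof (rule eq_0_if_deriv_abs_le_linear[of t0 t2 f f' K])
    fix s assume "t0 < s" "s < t2"
    with t0 have "s \<in> interior {0..}"
      by (simp add: interior_real_atLeast)
    then show "(f has_real_derivative f' s) (at s)"
      using deriv[of s] \<open>0 \<le> t0\<close> \<open>t0 < s\<close> at_within_interior by fastforce
    show "\<bar>f' s\<bar> \<le> K * \<bar>f s\<bar>"
      using bound \<open>t0 < s\<close> \<open>s < t2\<close> t2 by simp
  qed (use t2 cont[OF t0(1)] \<open>f t0 = 0\<close> in auto)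
  with negative_after[of t2] t2 show False
    by simp
qed

lemma eventually_at_right_less_if_continuous_within:
  fixes f :: "real \<Rightarrow> real"
  assumes "continuous (at t0 within {0..}) f" and "0 \<le> t0" and "f t0 < b"
  shows "\<forall>\<^sub>F t in at_right t0. f t < b"
proof -
  have "at_right t0 \<le> at t0 within {0..}"
    using \<open>0 \<le> t0\<close> by (intro at_le) auto
  moreover have "\<forall>\<^sub>F t in at t0 within {0..}. f t < b"
    using assms(1,3) unfolding continuous_within by (rule order_tendstoD(2))
  ultimately show ?thesis
    by (rule filter_leD)
qed

lemma order_preserved_by_common_ode:
  fixes x y g S :: "real \<Rightarrow> real"
  assumes deriv_x: "\<And>t. 0 \<le> t \<Longrightarrow> (x has_real_derivative g (x t) - S t * x t) (at t within {0..})"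
    and deriv_y: "\<And>t. 0 \<le> t \<Longrightarrow> (y has_real_derivative g (y t) - S t * y t) (at t within {0..})"
    and S_bounded: "\<And>t. 0 \<le> t \<Longrightarrow> \<bar>S t\<bar> \<le> K"
    and lipschitz: "L-lipschitz_on {-\<rho>..\<rho>} g"
    and meet_inside: "\<And>t. 0 \<le> t \<Longrightarrow> x t = y t \<Longrightarrow> \<bar>x t\<bar> < \<rho>"
    and "y 0 \<le> x 0" and "0 \<le> t"
  shows "y t \<le> x t"
proof -
  let ?f' = "\<lambda>t. (g (x t) - S t * x t) - (g (y t) - S t * y t)"
  have "0 \<le> x t - y t"
  proof (rule nonneg_preserved_if_deriv_locally_linear[of "\<lambda>t. x t - y t" ?f'])
    show "((\<lambda>t. x t - y t) has_real_derivative ?f' t) (at t within {0..})" if "0 \<le> t" for t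
      using deriv_x[OF that] deriv_y[OF that] by (rule derivative_intros)
  next
    fix t0 :: real assume "0 \<le> t0" and meet: "x t0 - y t0 = 0"
    have "\<bar>x t0\<bar> < \<rho>" "\<bar>y t0\<bar> < \<rho>"
      using meet_inside[OF \<open>0 \<le> t0\<close>] meet by auto
    then have "\<forall>\<^sub>F t in at_right t0. \<bar>x t\<bar> < \<rho> \<and> \<bar>y t\<bar> < \<rho> \<and> t0 < t"
      using deriv_x[OF \<open>0 \<le> t0\<close>] deriv_y[OF \<open>0 \<le> t0\<close>] \<open>0 \<le> t0\<close>
      by (intro eventually_conj eventually_at_right_less eventually_at_right_less_if_continuous_within
          continuous_intros DERIV_continuous)
    then have "\<forall>\<^sub>F t in at_right t0. \<bar>?f' t\<bar> \<le> (L + K) * \<bar>x t - y t\<bar>"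
    proof (rule eventually_mono, safe)
      fix t assume "\<bar>x t\<bar> < \<rho>" "\<bar>y t\<bar> < \<rho>" "t0 < t"
      then have "\<bar>g (x t) - g (y t)\<bar> \<le> L * \<bar>x t - y t\<bar>"
        using lipschitz_onD[OF lipschitz, of "x t" "y t"] by (auto simp: dist_real_def abs_less_iff)
      moreover have "\<bar>S t * (x t - y t)\<bar> \<le> K * \<bar>x t - y t\<bar>"
        using S_bounded[of t] \<open>0 \<le> t0\<close> \<open>t0 < t\<close> by (simp add: abs_mult mult_right_mono)
      moreover have "?f' t = (g (x t) - g (y t)) - S t * (x t - y t)"
        by (simp add: algebra_simps)
      ultimately show "\<bar>?f' t\<bar> \<le> (L + K) * \<bar>x t - y t\<bar>"
        by (simp add: algebra_simps abs_le_iff)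
    qed
    then show "\<exists>K. \<forall>\<^sub>F t in at_right t0. \<bar>?f' t\<bar> \<le> K * \<bar>x t - y t\<bar>"
      by blast
  qed (use \<open>y 0 \<le> x 0\<close> \<open>0 \<le> t\<close> in auto)
  then show ?thesis
    by simp
qed

lemma bessel_inequality_two:
  fixes a b x :: "'a::real_inner"
  assumes "a \<bullet> a = 1" "b \<bullet> b = 1" "a \<bullet> b = 0"
  shows "(a \<bullet> x)\<^sup>2 + (b \<bullet> x)\<^sup>2 \<le> x \<bullet> x"
proof -
  have "0 \<le> (x - (a \<bullet> x) *\<^sub>R a - (b \<bullet> x) *\<^sub>R b) \<bullet> (x - (a \<bullet> x) *\<^sub>R a - (b \<bullet> x) *\<^sub>R b)"
    by simp
  also have "\<dots> = x \<bullet> x - (a \<bullet> x)\<^sup>2 - (b \<bullet> x)\<^sup>2"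
    using assms by (simp add: inner_diff_left inner_diff_right inner_commute power2_eq_square algebra_simps)
  finally show ?thesis
    by simp
qed

locale spherical_gradient_flow =
  fixes c :: "nat \<Rightarrow> real" and v :: "nat \<Rightarrow> real^'d" and k :: nat and w :: "real \<Rightarrow> real^'d"
  assumes c_nonneg: "\<And>p. 0 \<le> c p"
    and summable_c: "summable (\<lambda>p. c p * real p)"
    and orthonormal: "\<And>i j. i \<in> {1..k} \<Longrightarrow> j \<in> {1..k} \<Longrightarrow> v i \<bullet> v j = (if i = j then 1 else 0)"
    and norm_w0: "norm (w 0) = 1"
    and flow: "\<And>t. 0 \<le> t \<Longrightarrow>
      (w has_vector_derivative - (gradL c v k (w t) - (w t \<bullet> gradL c v k (w t)) *\<^sub>R w t)) (at t within {0..})"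
begin

definition u :: "nat \<Rightarrow> real \<Rightarrow> real" where
  "u j t = v j \<bullet> w t"

definition S :: "real \<Rightarrow> real" where
  "S t = (\<Sum>i\<in>{1..k}. u i t * link_deriv c (u i t))"

lemma diffs_c_nonneg: "0 \<le> diffs c n"
  using c_nonneg by (simp add: diffs_def)

lemma summable_diffs_c: "summable (diffs c)"
  using summable_c by (simp add: summable_diffs_iff)

lemma inner_v_gradL:
  assumes "j \<in> {1..k}"
  shows "v j \<bullet> gradL c v k x = - link_deriv c (v j \<bullet> x)"
proof -
  have "v j \<bullet> gradL c v k x = - (\<Sum>i\<in>{1..k}. link_deriv c (v i \<bullet> x) * (v j \<bullet> v i))"
    by (simp add: gradL_eq_link_deriv inner_sum_right)
  also have "\<dots> = - (\<Sum>i\<in>{1..k}. if j = i then link_deriv c (v i \<bullet> x) else 0)"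
    using orthonormal[OF assms] by (intro arg_cong[where f = uminus] sum.cong) auto
  finally show ?thesis
    using assms by simp
qed

lemma inner_w_gradL: "w t \<bullet> gradL c v k (w t) = - S t"
  by (simp add: gradL_eq_link_deriv S_def u_def inner_sum_right inner_commute mult.commute)

lemma u_has_derivative:
  assumes "j \<in> {1..k}" and "0 \<le> t"
  shows "(u j has_real_derivative link_deriv c (u j t) - S t * u j t) (at t within {0..})"
proof -
  have "((\<lambda>t. v j \<bullet> w t) has_vector_derivative
      v j \<bullet> - (gradL c v k (w t) - (w t \<bullet> gradL c v k (w t)) *\<^sub>R w t)) (at t within {0..})"
    using bounded_linear_inner_right flow[OF \<open>0 \<le> t\<close>] by (rule bounded_linear.has_vector_derivative)
  then show ?thesis
    using inner_v_gradL[OF \<open>j \<in> {1..k}\<close>] inner_w_gradL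
    by (simp add: has_real_derivative_iff_has_vector_derivative u_def[abs_def] inner_diff_right)
qed

lemma sqnorm_w_has_derivative:
  assumes "0 \<le> t"
  shows "((\<lambda>t. w t \<bullet> w t) has_real_derivative 2 * S t * (1 - w t \<bullet> w t)) (at t within {0..})"
proof -
  let ?w' = "- (gradL c v k (w t) - (w t \<bullet> gradL c v k (w t)) *\<^sub>R w t)"
  have "((\<lambda>t. w t \<bullet> w t) has_vector_derivative w t \<bullet> ?w' + ?w' \<bullet> w t) (at t within {0..})"
    using bounded_bilinear_inner flow[OF assms] flow[OF assms] by (rule bounded_bilinear.has_vector_derivative)
  moreover have "w t \<bullet> ?w' = S t * (1 - w t \<bullet> w t)"
    using inner_w_gradL[of t] by (simp add: inner_diff_right algebra_simps)
  ultimately show ?thesis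
    by (simp add: has_real_derivative_iff_has_vector_derivative inner_commute mult.assoc)
qed

lemma abs_u_le_norm_w:
  assumes "j \<in> {1..k}"
  shows "\<bar>u j t\<bar> \<le> norm (w t)"
proof -
  have "norm (v j) = 1"
    using orthonormal[OF assms assms] by (simp add: norm_eq_sqrt_inner)
  then show ?thesis
    using Cauchy_Schwarz_ineq2[of "v j" "w t"] by (simp add: u_def)
qed

lemma abs_S_le:
  assumes "norm (w t) \<le> B" and "\<And>x. \<bar>x\<bar> \<le> B \<Longrightarrow> \<bar>link_deriv c x\<bar> \<le> M"
  shows "\<bar>S t\<bar> \<le> real k * (B * M)"
proof -
  have "\<bar>S t\<bar> \<le> (\<Sum>i\<in>{1..k}. \<bar>u i t * link_deriv c (u i t)\<bar>)"
    unfolding S_def by (rule sum_abs)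
  also have "\<dots> \<le> real (card {1..k}) * (B * M)"
  proof (rule sum_bounded_above)
    fix i assume "i \<in> {1..k}"
    then have "\<bar>u i t\<bar> \<le> B"
      using abs_u_le_norm_w assms(1) order_trans by blast
    then show "\<bar>u i t * link_deriv c (u i t)\<bar> \<le> B * M"
      using assms(2) by (simp add: abs_mult mult_mono')
  qed
  finally show ?thesis
    by simp
qed

(* Before norm_w_eq_1 is known, the overlaps may exceed 1 in modulus, which is why the
   bound on link_deriv beyond [-1, 1] is needed here. *)
lemma S_eventually_bounded:
  assumes "0 \<le> t0" and "norm (w t0) = 1"
  shows "\<exists>K. \<forall>\<^sub>F s in at_right t0. \<bar>S s\<bar> \<le> K"
proof -
  obtain \<delta> M where "\<delta> > 0" and M: "\<And>x. \<bar>x\<bar> \<le> 1 + \<delta> \<Longrightarrow> \<bar>link_deriv c x\<bar> \<le> M"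
    using powser_nonneg_coeffs_bounded_near_unit_interval[OF diffs_c_nonneg summable_diffs_c]
    by (auto simp: link_deriv_eq_powser)
  have "\<forall>\<^sub>F s in at_right t0. norm (w s) < 1 + \<delta>"
    using flow[OF \<open>0 \<le> t0\<close>] assms \<open>\<delta> > 0\<close>
    by (intro eventually_at_right_less_if_continuous_within continuous_intros
        has_vector_derivative_continuous) auto
  then have "\<forall>\<^sub>F s in at_right t0. \<bar>S s\<bar> \<le> real k * ((1 + \<delta>) * M)"
    by (rule eventually_mono) (use M in \<open>auto intro: abs_S_le\<close>)
  then show ?thesis
    by blast
qed

lemma norm_w_eq_1:
  assumes "0 \<le> t"
  shows "norm (w t) = 1"
proof -
  define r where "r t = 1 - w t \<bullet> w t" for t
  have deriv_r: "(r has_real_derivative - (2 * S t * r t)) (at t within {0..})" if "0 \<le> t" for t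
    unfolding r_def[abs_def] using sqnorm_w_has_derivative[OF that]
    by (auto intro!: derivative_eq_intros)
  have "r 0 = 0"
    using norm_w0 by (simp add: r_def power2_norm_eq_inner[symmetric])
  have local_bound: "\<exists>K. \<forall>\<^sub>F s in at_right t0. \<bar>2 * S s * r s\<bar> \<le> K * \<bar>r s\<bar>"
    if "0 \<le> t0" and "r t0 = 0" for t0
  proof -
    have "norm (w t0) = 1"
      using \<open>r t0 = 0\<close> by (simp add: r_def norm_eq_sqrt_inner)
    then obtain K where "\<forall>\<^sub>F s in at_right t0. \<bar>S s\<bar> \<le> K"
      using S_eventually_bounded[OF \<open>0 \<le> t0\<close>] by blast
    then have "\<forall>\<^sub>F s in at_right t0. \<bar>2 * S s * r s\<bar> \<le> 2 * K * \<bar>r s\<bar>"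
      by (rule eventually_mono) (simp add: abs_mult mult_right_mono)
    then show ?thesis
      by blast
  qed
  have "0 \<le> r t"
    using nonneg_preserved_if_deriv_locally_linear[OF deriv_r] \<open>r 0 = 0\<close> local_bound assms by auto
  moreover have "0 \<le> - r t"
    using nonneg_preserved_if_deriv_locally_linear[of "\<lambda>t. - r t" "\<lambda>t. 2 * S t * r t"]
      deriv_r[THEN DERIV_minus] \<open>r 0 = 0\<close> local_bound assms by auto
  ultimately show ?thesis
    by (simp add: r_def norm_eq_sqrt_inner)
qed

definition overlap_ode_solution :: "(real \<Rightarrow> real) \<Rightarrow> bool" where
  "overlap_ode_solution x \<longleftrightarrow>
    (\<forall>t\<ge>0. (x has_real_derivative link_deriv c (x t) - S t * x t) (at t within {0..}))"

lemma overlap_ode_solution_u: "j \<in> {1..k} \<Longrightarrow> overlap_ode_solution (u j)"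
  by (simp add: overlap_ode_solution_def u_has_derivative)

lemma S_bounded: "\<exists>K. \<forall>t\<ge>0. \<bar>S t\<bar> \<le> K"
proof -
  have bound: "\<bar>link_deriv c x\<bar> \<le> (\<Sum>n. diffs c n)" if "\<bar>x\<bar> \<le> 1" for x
    using powser_nonneg_coeffs_abs_le(2)[OF diffs_c_nonneg _ that] summable_diffs_c
    by (simp add: link_deriv_eq_powser)
  have "\<bar>S t\<bar> \<le> real k * (1 * (\<Sum>n. diffs c n))" if "0 \<le> t" for t
    by (rule abs_S_le[OF _ bound]) (simp add: norm_w_eq_1[OF that])
  then show ?thesis
    by blast
qed

lemma sum_sq_u_le_1:
  assumes "i \<in> {1..k}" "j \<in> {1..k}" "i \<noteq> j" "0 \<le> t"
  shows "(u i t)\<^sup>2 + (u j t)\<^sup>2 \<le> 1"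
  using bessel_inequality_two[of "v i" "v j" "w t"] orthonormal[of i i] orthonormal[of j j]
    orthonormal[of i j] norm_w_eq_1[OF \<open>0 \<le> t\<close>] assms
  by (simp add: u_def power2_norm_eq_inner[symmetric])

lemma overlap_ode_solutions_ordered:
  assumes "overlap_ode_solution x" "overlap_ode_solution y"
    and sum_sq: "\<And>t. 0 \<le> t \<Longrightarrow> (x t)\<^sup>2 + (y t)\<^sup>2 \<le> 1"
    and "y 0 \<le> x 0" and "0 \<le> t"
  shows "y t \<le> x t"
proof -
  obtain K where K: "\<And>t. 0 \<le> t \<Longrightarrow> \<bar>S t\<bar> \<le> K"
    using S_bounded by blast
  have "link_deriv c = (\<lambda>x. \<Sum>n. diffs c n * x ^ n)"
    by (simp add: fun_eq_iff link_deriv_eq_powser)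
  then obtain L where L: "L-lipschitz_on {- (3/4)..3/4} (link_deriv c)"
    using powser_nonneg_coeffs_lipschitz[OF diffs_c_nonneg summable_diffs_c, of "3/4"] by auto
  have meet_inside: "\<bar>x t\<bar> < 3/4" if "0 \<le> t" "x t = y t" for t
  proof -
    have "\<bar>x t\<bar>\<^sup>2 < (3/4)\<^sup>2"
      using sum_sq[OF \<open>0 \<le> t\<close>] \<open>x t = y t\<close> by (simp add: power2_eq_square)
    then show ?thesis
      by (rule power2_less_imp_less) simp
  qed
  show ?thesis
    using order_preserved_by_common_ode[where x = x and y = y and g = "link_deriv c" and S = S,
        OF _ _ K L meet_inside \<open>y 0 \<le> x 0\<close> \<open>0 \<le> t\<close>] assms(1,2)
    unfolding overlap_ode_solution_def by blast
qed

lemma u_order_preserved: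
  assumes "i \<in> {1..k}" "j \<in> {1..k}" "u j 0 \<le> u i 0" "0 \<le> t"
  shows "u j t \<le> u i t"
proof (cases "i = j")
  case False
  then show ?thesis
    using overlap_ode_solutions_ordered[OF overlap_ode_solution_u overlap_ode_solution_u]
      sum_sq_u_le_1 assms by blast
qed simp

lemma link_deriv_odd:
  assumes "\<forall>p. odd p \<longrightarrow> c p = 0" and "\<bar>x\<bar> \<le> 1"
  shows "link_deriv c (- x) = - link_deriv c x"
proof -
  have "summable (\<lambda>n. diffs c n * x ^ n)"
    using powser_nonneg_coeffs_abs_le(1)[OF diffs_c_nonneg _ \<open>\<bar>x\<bar> \<le> 1\<close>] summable_diffs_c by simp
  moreover have "diffs c n * (- x) ^ n = - (diffs c n * x ^ n)" for n
    using assms(1) by (cases "even n") (auto simp: diffs_def)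
  ultimately show ?thesis
    by (simp add: link_deriv_eq_powser suminf_minus)
qed

lemma overlap_ode_solution_uminus_u:
  assumes "\<forall>p. odd p \<longrightarrow> c p = 0" and "j \<in> {1..k}"
  shows "overlap_ode_solution (\<lambda>t. - u j t)"
  unfolding overlap_ode_solution_def
proof (intro allI impI)
  fix t :: real assume "0 \<le> t"
  have "\<bar>u j t\<bar> \<le> 1"
    using abs_u_le_norm_w[OF assms(2)] norm_w_eq_1[OF \<open>0 \<le> t\<close>] by metis
  then have "link_deriv c (- u j t) = - link_deriv c (u j t)"
    by (rule link_deriv_odd[OF assms(1)])
  with u_has_derivative[OF assms(2) \<open>0 \<le> t\<close>, THEN DERIV_minus]
  show "((\<lambda>t. - u j t) has_real_derivative link_deriv c (- u j t) - S t * - u j t) (at t within {0..})"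
    by (simp add: algebra_simps)
qed

lemma abs_u_order_preserved:
  assumes odd_c: "\<forall>p. odd p \<longrightarrow> c p = 0"
    and "i \<in> {1..k}" "j \<in> {1..k}" "\<bar>u j 0\<bar> \<le> \<bar>u i 0\<bar>" "0 \<le> t"
  shows "\<bar>u j t\<bar> \<le> \<bar>u i t\<bar>"
proof (cases "i = j")
  case False
  \<comment> \<open>Compare both \<open>u j\<close> and \<open>-u j\<close> with whichever of \<open>u i\<close>, \<open>-u i\<close> starts nonnegative.\<close>
  define x where "x s = (if 0 \<le> u i 0 then u i s else - u i s)" for s
  have x_solution: "overlap_ode_solution x"
  proof (cases "0 \<le> u i 0")
    case True
    then have "x = u i"
      by (simp add: x_def fun_eq_iff)
    then show ?thesis
      using overlap_ode_solution_u[OF \<open>i \<in> {1..k}\<close>] by simp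
  next
    case False
    then have "x = (\<lambda>t. - u i t)"
      by (simp add: x_def fun_eq_iff)
    then show ?thesis
      using overlap_ode_solution_uminus_u[OF odd_c \<open>i \<in> {1..k}\<close>] by simp
  qed
  have x: "x 0 = \<bar>u i 0\<bar>" "x t \<le> \<bar>u i t\<bar>" and x_sq: "(x s)\<^sup>2 = (u i s)\<^sup>2" for s
    by (auto simp: x_def)
  have sum_sq: "(x s)\<^sup>2 + (u j s)\<^sup>2 \<le> 1" "(x s)\<^sup>2 + (- u j s)\<^sup>2 \<le> 1" if "0 \<le> s" for s
    using sum_sq_u_le_1[OF \<open>i \<in> {1..k}\<close> \<open>j \<in> {1..k}\<close> False that] x_sq by simp_all
  have "u j t \<le> x t"
  proof (rule overlap_ode_solutions_ordered[OF x_solution overlap_ode_solution_u[OF \<open>j \<in> {1..k}\<close>]])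
    show "u j 0 \<le> x 0"
      using x(1) \<open>\<bar>u j 0\<bar> \<le> \<bar>u i 0\<bar>\<close> by linarith
  qed (use sum_sq(1) \<open>0 \<le> t\<close> in auto)
  moreover have "- u j t \<le> x t"
  proof (rule overlap_ode_solutions_ordered[OF x_solution overlap_ode_solution_uminus_u[OF odd_c \<open>j \<in> {1..k}\<close>]])
    show "- u j 0 \<le> x 0"
      using x(1) \<open>\<bar>u j 0\<bar> \<le> \<bar>u i 0\<bar>\<close> by linarith
  qed (use sum_sq(2) \<open>0 \<le> t\<close> in auto)
  ultimately show ?thesis
    using x(2) by linarith
qed simp

end

theorem lemma5:
  fixes \<sigma> \<sigma>s :: "real \<Rightarrow> real"
    and v :: "nat \<Rightarrow> real^'d"
    and k :: nat
    and w :: "real \<Rightarrow> real^'d"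
  defines "c \<equiv> (\<lambda>p. hcoeff \<sigma> p * hcoeff \<sigma>s p)"
      and "ps \<equiv> info_exp \<sigma>s"
  assumes L2: "gauss_L2 \<sigma>" "gauss_L2 \<sigma>s"
      and no_const: "hcoeff \<sigma> 0 = 0" "hcoeff \<sigma>s 0 = 0"
      and cps_pos: "c ps > 0"
      and c_nonneg: "\<And>p. p \<ge> ps \<Longrightarrow> c p \<ge> 0"
      and c_summ: "summable (\<lambda>p. c p * real p)"
      and ps_ge2: "ps \<ge> 2"
      and k_pos: "k \<ge> 1"
      and orth: "\<And>i j. i \<in> {1..k} \<Longrightarrow> j \<in> {1..k} \<Longrightarrow> v i \<bullet> v j = (if i = j then 1 else 0)"
      and w0: "norm (w 0) = 1"
      and flow: "\<And>t. t \<ge> 0 \<Longrightarrow>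
         (w has_vector_derivative
            (- (gradL c v k (w t) - (w t \<bullet> gradL c v k (w t)) *\<^sub>R w t))) (at t within {0..})"
      and u1max: "\<And>j. j \<in> {1..k} \<Longrightarrow> \<bar>v j \<bullet> w 0\<bar> \<le> \<bar>v 1 \<bullet> w 0\<bar>"
  shows "((\<forall>j\<in>{1..k}. v j \<bullet> w 0 > 0) \<longrightarrow>
            (\<forall>t\<ge>0. \<forall>j\<in>{1..k}. v j \<bullet> w t \<le> v 1 \<bullet> w t))
       \<and> ((\<forall>x. \<sigma>s (- x) = \<sigma>s x) \<longrightarrow>
            (\<forall>t\<ge>0. \<forall>j\<in>{1..k}. \<bar>v j \<bullet> w t\<bar> \<le> \<bar>v 1 \<bullet> w t\<bar>))"
proof -
  \<comment> \<open>Only \<open>c \<ge> 0\<close> and \<open>summable (\<lambda>p. c p * p)\<close> are used.\<close>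
  have "0 \<le> c p" for p
    using c_nonneg[of p] hcoeff_eq_0_below_info_exp[of p \<sigma>s] by (cases "ps \<le> p") (auto simp: c_def ps_def)
  then interpret F: spherical_gradient_flow c v k w
    using c_summ orth w0 flow by unfold_locales auto
  have one: "1 \<in> {1..k}"
    using k_pos by simp
  have part_i: "v j \<bullet> w t \<le> v 1 \<bullet> w t"
    if "\<forall>j\<in>{1..k}. v j \<bullet> w 0 > 0" "0 \<le> t" "j \<in> {1..k}" for j t
  proof -
    have "0 < v j \<bullet> w 0" "0 < v 1 \<bullet> w 0"
      using that(1,3) one by auto
    then have "v j \<bullet> w 0 \<le> v 1 \<bullet> w 0"
      using u1max[OF \<open>j \<in> {1..k}\<close>] by simp
    then show ?thesis
      using F.u_order_preserved[OF one \<open>j \<in> {1..k}\<close> _ \<open>0 \<le> t\<close>] by (simp add: F.u_def)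
  qed
  have part_ii: "\<bar>v j \<bullet> w t\<bar> \<le> \<bar>v 1 \<bullet> w t\<bar>"
    if "\<forall>x. \<sigma>s (- x) = \<sigma>s x" "0 \<le> t" "j \<in> {1..k}" for j t
  proof -
    have "\<forall>p. odd p \<longrightarrow> c p = 0"
      using hcoeff_odd_eq_0[of \<sigma>s] that(1) by (simp add: c_def)
    then show ?thesis
      using F.abs_u_order_preserved[OF _ one \<open>j \<in> {1..k}\<close> _ \<open>0 \<le> t\<close>] u1max[OF \<open>j \<in> {1..k}\<close>]
      by (simp add: F.u_def)
  qed
  show ?thesis
    using part_i part_ii by blast
qed

end
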